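(* Let $\mathcal{H}$ be a separable complex Hilbert space, $A\in\mathcal{B}(\mathcal{H})$, and $g\in\mathrm{ran}A$. Let $(u_n)_{n\in\mathbb{N}}$ and $(v_n)_{n\in\mathbb{N}}$ be orthonormal bases of $\mathcal{H}$, and for each $N$ let $A_N$ and $g_N$ be as defined in the context. Then there exists a sequence $(f^{(N)})_{N\in\mathbb{N}}$ with $f^{(N)}\in\mathbb{C}^N$ for each $N$ such that \[\lim_{N\to\infty}\|A_Nf^{(N)}-g_N\|_{\mathbb{C}^N}=0.\]
   Context: For orthonormal bases $(u_n)$, $(v_n)$ of $\mathcal{H}$ and $N\in\mathbb{N}$: $A_N$ is the $N\times N$ matrix with entries $(A_N)_{ij}=\langle v_i,Au_j\rangle$ for $i,j\in\{1,\dots,N\}$, and $g_N=(\langle v_1,g\rangle,\dots,\langle v_N,g\rangle)\in\mathbb{C}^N$. The inner product is antilinear in the first entry. $\mathcal{B}(\mathcal{H})$ denotes the bounded everywhere defined linear operators on $\mathcal{H}$. *)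

theory Defs
  imports "HOL-Analysis.Analysis"
begin

class scaleC = scaleR +
  fixes scaleC :: "complex \<Rightarrow> 'a \<Rightarrow> 'a" (infixr "*\<^sub>C" 75)
  assumes scaleR_scaleC: "scaleR r = scaleC (complex_of_real r)"

class complex_vector = scaleC + real_vector +
  assumes scaleC_add_right: "a *\<^sub>C (x + y) = a *\<^sub>C x + a *\<^sub>C y"
    and scaleC_add_left: "(a + b) *\<^sub>C x = a *\<^sub>C x + b *\<^sub>C x"
    and scaleC_scaleC: "a *\<^sub>C (b *\<^sub>C x) = (a * b) *\<^sub>C x"
    and scaleC_one: "1 *\<^sub>C x = x"

class complex_inner = complex_vector + real_normed_vector +
  fixes cinner :: "'a \<Rightarrow> 'a \<Rightarrow> complex"
  assumes cinner_commute: "cinner x y = cnj (cinner y x)"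
    and cinner_add_left: "cinner (x + y) z = cinner x z + cinner y z"
    and cinner_scaleC_left: "cinner (r *\<^sub>C x) y = cnj r * cinner x y"
    and cinner_self_real_nonneg: "Im (cinner x x) = 0 \<and> 0 \<le> Re (cinner x x)"
    and cinner_eq_zero_iff: "cinner x x = 0 \<longleftrightarrow> x = 0"
    and norm_eq_sqrt_cinner: "norm x = sqrt (Re (cinner x x))"

definition bounded_clinear_op :: "('a::complex_inner \<Rightarrow> 'b::complex_inner) \<Rightarrow> bool" where
  "bounded_clinear_op A \<longleftrightarrow>
     (\<forall>x y. A (x + y) = A x + A y) \<and> (\<forall>c x. A (c *\<^sub>C x) = c *\<^sub>C A x) \<and>
     (\<exists>K. \<forall>x. norm (A x) \<le> K * norm x)"

definition cspan :: "'a::complex_vector set \<Rightarrow> 'a set" where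
  "cspan S = {x. \<exists>F c. finite F \<and> F \<subseteq> S \<and> x = (\<Sum>v\<in>F. c v *\<^sub>C v)}"

definition is_onb :: "(nat \<Rightarrow> 'a::complex_inner) \<Rightarrow> bool" where
  "is_onb u \<longleftrightarrow> (\<forall>i j. cinner (u i) (u j) = (if i = j then 1 else 0))
                 \<and> closure (cspan (range u)) = UNIV"

text \<open>Finite sections: entries indexed by 0..N-1 (shifted from 1..N).\<close>
definition sect_mat :: "(nat \<Rightarrow> 'a::complex_inner) \<Rightarrow> (nat \<Rightarrow> 'a) \<Rightarrow> ('a \<Rightarrow> 'a) \<Rightarrow> nat \<Rightarrow> nat \<Rightarrow> complex" where
  "sect_mat u v A i j = cinner (v i) (A (u j))"

definition sect_vec :: "(nat \<Rightarrow> 'a::complex_inner) \<Rightarrow> 'a \<Rightarrow> nat \<Rightarrow> complex" where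
  "sect_vec v g i = cinner (v i) g"

definition cnorm_N :: "nat \<Rightarrow> (nat \<Rightarrow> complex) \<Rightarrow> real" where
  "cnorm_N N x = sqrt (\<Sum>i<N. (cmod (x i))\<^sup>2)"

end

theory Submission imports Defs begin

text \<open>Pick \<open>f\<^sub>0\<close> with \<open>A f\<^sub>0 = g\<close> and let \<open>c\<^sub>N\<close> be the coefficients of a near-best approximation
  of \<open>f\<^sub>0\<close> from the span of \<open>u\<^sub>1, \<dots>, u\<^sub>N\<close>; since the span of the basis is dense, the
  approximation errors tend to \<open>0\<close>. The residual \<open>A\<^sub>N c\<^sub>N - g\<^sub>N\<close> is the vector of the first \<open>N\<close>
  coefficients of \<open>A (\<Sum>\<^sub>j c\<^sub>N\<^sub>j u\<^sub>j - f\<^sub>0)\<close> with respect to \<open>v\<close>, so by Bessel's inequality its norm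
  is at most \<open>\<parallel>A\<parallel>\<close> times that error.\<close>

lemma scaleC_zero_left [simp]: "(0::complex) *\<^sub>C (x::'a::complex_vector) = 0"
  using scaleC_add_left[of 0 0 x] by simp

lemma cinner_add_right: "cinner x (y + z) = cinner x y + cinner x z"
  by (metis cinner_commute cinner_add_left complex_cnj_add)

lemma cinner_scaleC_right: "cinner x (r *\<^sub>C y) = r * cinner x y"
  by (metis cinner_commute cinner_scaleC_left complex_cnj_mult complex_cnj_cnj)

lemma cinner_zero_left [simp]: "cinner 0 y = 0"
  using cinner_add_left[of 0 0 y] by simp

lemma cinner_zero_right [simp]: "cinner y 0 = 0"
  using cinner_add_right[of y 0 0] by simp

lemma cinner_diff_left: "cinner (x - y) z = cinner x z - cinner y z"
  using cinner_add_left[of "x - y" y z] by simp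

lemma cinner_diff_right: "cinner z (x - y) = cinner z x - cinner z y"
  using cinner_add_right[of z "x - y" y] by simp

lemma cinner_sum_left: "cinner (\<Sum>i\<in>I. f i) y = (\<Sum>i\<in>I. cinner (f i) y)"
  by (induction I rule: infinite_finite_induct) (auto simp: cinner_add_left)

lemma cinner_sum_right: "cinner y (\<Sum>i\<in>I. f i) = (\<Sum>i\<in>I. cinner y (f i))"
  by (induction I rule: infinite_finite_induct) (auto simp: cinner_add_right)

lemma cinner_self_eq_norm_square: "cinner x x = complex_of_real ((norm x)\<^sup>2)"
  using cinner_self_real_nonneg[of x] by (simp add: norm_eq_sqrt_cinner complex_eq_iff)

lemma cnj_mult_self: "cnj c * c = complex_of_real ((cmod c)\<^sup>2)"
  by (metis complex_norm_square mult.commute complex_mult_cnj)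

lemma cinner_sum_orthonormal:
  fixes v :: "nat \<Rightarrow> 'a::complex_inner"
  assumes "\<forall>i j. cinner (v i) (v j) = (if i = j then 1 else 0)"
  shows "cinner (\<Sum>i<N. a i *\<^sub>C v i) (\<Sum>i<N. a i *\<^sub>C v i) = (\<Sum>i<N. complex_of_real ((cmod (a i))\<^sup>2))"
proof -
  have "cinner (\<Sum>i<N. a i *\<^sub>C v i) (\<Sum>i<N. a i *\<^sub>C v i)
      = (\<Sum>i<N. a i * (\<Sum>j<N. cnj (a j) * (if j = i then 1 else 0)))"
    by (simp only: cinner_sum_left cinner_sum_right cinner_scaleC_left cinner_scaleC_right assms)
  also have "\<dots> = (\<Sum>i<N. complex_of_real ((cmod (a i))\<^sup>2))"
    by (intro sum.cong refl)
       (simp add: if_distrib[where f = "times _"] complex_norm_square[unfolded of_real_power] cong: if_cong)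
  finally show ?thesis .
qed

lemma bessel_inequality:
  fixes v :: "nat \<Rightarrow> 'a::complex_inner"
  assumes orthonormal: "\<forall>i j. cinner (v i) (v j) = (if i = j then 1 else 0)"
  shows "cnorm_N N (\<lambda>i. cinner (v i) z) \<le> norm z"
proof -
  define a where "a i = cinner (v i) z" for i
  define s where "s = (\<Sum>i<N. a i *\<^sub>C v i)"
  define S where "S = (\<Sum>i<N. complex_of_real ((cmod (a i))\<^sup>2))"
  have s_z: "cinner s z = S"
    unfolding s_def S_def cinner_sum_left cinner_scaleC_left a_def[symmetric]
    by (simp add: cnj_mult_self)
  then have z_s: "cinner z s = S"
    using cinner_commute[of z s] unfolding S_def by simp
  have s_s: "cinner s s = S"
    unfolding s_def S_def by (rule cinner_sum_orthonormal[OF orthonormal])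
  have "cinner (z - s) (z - s) = complex_of_real ((norm z)\<^sup>2) - S"
    by (simp only: cinner_diff_left cinner_diff_right s_z z_s s_s cinner_self_eq_norm_square[of z]) simp
  then have "(\<Sum>i<N. (cmod (a i))\<^sup>2) \<le> (norm z)\<^sup>2"
    using cinner_self_real_nonneg[of "z - s"] by (simp add: S_def)
  then show ?thesis
    using real_sqrt_le_mono by (fastforce simp: cnorm_N_def a_def)
qed

lemma onb_eventually_approximates:
  fixes u :: "nat \<Rightarrow> 'a::complex_inner"
  assumes "is_onb u" "e > 0"
  shows "\<forall>\<^sub>F N in sequentially. \<exists>c. norm ((\<Sum>j<N. c j *\<^sub>C u j) - f) < e"
proof -
  have orthonormal: "\<forall>i j. cinner (u i) (u j) = (if i = j then 1 else 0)"
    and dense: "closure (cspan (range u)) = UNIV"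
    using assms(1) unfolding is_onb_def by auto
  have "inj u"
    by (rule injI) (metis orthonormal one_neq_zero)
  have "f \<in> closure (cspan (range u))" using dense by simp
  then obtain y where y: "y \<in> cspan (range u)" "dist y f < e"
    using assms(2) closure_approachable by blast
  then obtain F c where F: "finite F" "F \<subseteq> range u" "y = (\<Sum>w\<in>F. c w *\<^sub>C w)"
    unfolding cspan_def by blast
  define J where "J = u -` F"
  have "finite J"
    unfolding J_def using F(1) \<open>inj u\<close> by (simp add: finite_vimageI)
  have y_J: "y = (\<Sum>j\<in>J. c (u j) *\<^sub>C u j)"
  proof -
    have "F = u ` J" unfolding J_def using F(2) by auto
    then show ?thesis
      unfolding F(3) by (simp add: sum.reindex inj_on_subset[OF \<open>inj u\<close>])
  qed
  obtain M where M: "J \<subseteq> {..<M}" using \<open>finite J\<close> finite_nat_bounded by blast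
  show ?thesis
    unfolding eventually_sequentially
  proof (intro exI[of _ M] allI impI)
    fix N assume "M \<le> N"
    define c' where "c' j = (if j \<in> J then c (u j) else 0)" for j
    have "(\<Sum>j<N. c' j *\<^sub>C u j) = (\<Sum>j\<in>J. c' j *\<^sub>C u j)"
      using \<open>M \<le> N\<close> M
      by (intro sum.mono_neutral_right) (auto simp: c'_def)
    also have "\<dots> = y" unfolding y_J by (rule sum.cong) (auto simp: c'_def)
    finally show "\<exists>c. norm ((\<Sum>j<N. c j *\<^sub>C u j) - f) < e"
      using y(2) by (auto simp: dist_norm)
  qed
qed

text \<open>Choose \<open>c N\<close> within \<open>1/(N+1)\<close> of the infimum of \<open>S N\<close>; the infima tend to \<open>0\<close>.\<close>
lemma choice_tendsto_zero:
  fixes S :: "nat \<Rightarrow> 'c \<Rightarrow> real"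
  assumes nonneg: "\<And>N c. 0 \<le> S N c"
    and small: "\<And>e. e > 0 \<Longrightarrow> \<forall>\<^sub>F N in sequentially. \<exists>c. S N c < e"
  shows "\<exists>c. (\<lambda>N. S N (c N)) \<longlonglongrightarrow> 0"
proof -
  define d where "d N = Inf (range (S N))" for N
  have bdd: "bdd_below (range (S N))" for N
    using nonneg by (intro bdd_belowI) auto
  have "\<exists>c. S N c < d N + 1 / (real N + 1)" for N
  proof -
    have "Inf (range (S N)) < d N + 1 / (real N + 1)"
      unfolding d_def by simp
    then show ?thesis
      using cInf_lessD[of "range (S N)"] by blast
  qed
  then obtain c where c: "\<And>N. S N (c N) < d N + 1 / (real N + 1)" by metis
  have "d \<longlonglongrightarrow> 0"
  proof (rule LIMSEQ_I)
    fix e :: real assume "e > 0"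
    have "norm (d N - 0) < e" if "\<exists>c. S N c < e" for N
    proof -
      from that obtain c where "S N c < e" by blast
      moreover have "d N \<le> S N c" unfolding d_def by (rule cInf_lower[OF _ bdd]) auto
      moreover have "0 \<le> d N" unfolding d_def using nonneg by (intro cInf_greatest) auto
      ultimately show ?thesis by simp
    qed
    then show "\<exists>M. \<forall>N\<ge>M. norm (d N - 0) < e"
      using small[OF \<open>e > 0\<close>] unfolding eventually_sequentially by blast
  qed
  moreover have "(\<lambda>N. 1 / (real N + 1)) \<longlonglongrightarrow> 0"
    using LIMSEQ_inverse_real_of_nat by (simp add: divide_inverse add.commute)
  ultimately have upper: "(\<lambda>N. d N + 1 / (real N + 1)) \<longlonglongrightarrow> 0 + 0"
    by (rule tendsto_add)
  have bound: "\<forall>N. norm (S N (c N)) \<le> d N + 1 / (real N + 1)"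
    using c nonneg by (smt (verit) real_norm_def)
  have "(\<lambda>N. S N (c N)) \<longlonglongrightarrow> 0"
    using Lim_null_comparison[OF always_eventually[OF bound]] upper by simp
  then show ?thesis by blast
qed

lemma bounded_clinear_op_sum:
  assumes "bounded_clinear_op A"
  shows "A (\<Sum>j\<in>I. c j *\<^sub>C u j) = (\<Sum>j\<in>I. c j *\<^sub>C A (u j))"
proof -
  interpret additive A
    using assms unfolding bounded_clinear_op_def by unfold_locales blast
  show ?thesis
    using assms by (simp add: sum bounded_clinear_op_def)
qed

lemma bounded_clinear_op_diff:
  assumes "bounded_clinear_op A"
  shows "A (x - y) = A x - A y"
proof -
  interpret additive A
    using assms unfolding bounded_clinear_op_def by unfold_locales blast
  show ?thesis by (rule diff)
qed

lemma section_residual_le: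
  fixes A :: "'a::complex_inner \<Rightarrow> 'a"
  assumes "bounded_clinear_op A" and K: "\<And>x. norm (A x) \<le> K * norm x"
    and "is_onb v"
  shows "cnorm_N N (\<lambda>i. (\<Sum>j<N. sect_mat u v A i j * c j) - sect_vec v (A f) i)
           \<le> K * norm ((\<Sum>j<N. c j *\<^sub>C u j) - f)"
proof -
  define x where "x = (\<Sum>j<N. c j *\<^sub>C u j)"
  have coeff: "(\<Sum>j<N. sect_mat u v A i j * c j) - sect_vec v (A f) i = cinner (v i) (A (x - f))" for i
    using bounded_clinear_op_sum[OF assms(1), of c u "{..<N}"]
    by (simp add: x_def sect_mat_def sect_vec_def bounded_clinear_op_diff[OF assms(1)]
        cinner_diff_right cinner_sum_right cinner_scaleC_right mult.commute)
  have "cnorm_N N (\<lambda>i. cinner (v i) (A (x - f))) \<le> norm (A (x - f))"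
    using \<open>is_onb v\<close> unfolding is_onb_def by (blast intro: bessel_inequality)
  also have "\<dots> \<le> K * norm (x - f)" by (rule K)
  finally show ?thesis unfolding coeff x_def .
qed

lemma cnorm_N_nonneg: "0 \<le> cnorm_N N x"
  unfolding cnorm_N_def by (intro real_sqrt_ge_zero sum_nonneg) simp

theorem lemma2p2:
  fixes A :: "'a::{complex_inner, complete_space} \<Rightarrow> 'a"
    and g :: 'a and u v :: "nat \<Rightarrow> 'a"
  assumes "\<exists>D :: 'a set. countable D \<and> closure D = UNIV"
    and "bounded_clinear_op A"
    and "g \<in> range A"
    and "is_onb u" and "is_onb v"
  shows "\<exists>f :: nat \<Rightarrow> nat \<Rightarrow> complex.
           (\<lambda>N. cnorm_N N (\<lambda>i. (\<Sum>j<N. sect_mat u v A i j * f N j) - sect_vec v g i))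
             \<longlonglongrightarrow> 0"
proof -
  obtain f0 where g: "g = A f0" using assms(3) by auto
  obtain K where K: "\<And>x. norm (A x) \<le> K * norm x"
    using assms(2) unfolding bounded_clinear_op_def by blast
  have "\<exists>c. (\<lambda>N. norm ((\<Sum>j<N. c N j *\<^sub>C u j) - f0)) \<longlonglongrightarrow> 0"
    by (rule choice_tendsto_zero) (simp_all add: onb_eventually_approximates[OF assms(4)])
  then obtain c where approx: "(\<lambda>N. norm ((\<Sum>j<N. c N j *\<^sub>C u j) - f0)) \<longlonglongrightarrow> 0" ..
  have "(\<lambda>N. cnorm_N N (\<lambda>i. (\<Sum>j<N. sect_mat u v A i j * c N j) - sect_vec v g i)) \<longlonglongrightarrow> 0"
    using section_residual_le[OF assms(2) K assms(5)] cnorm_N_nonneg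
    by (intro Lim_null_comparison[OF always_eventually tendsto_mult_right_zero[OF approx, of K]])
       (simp add: g)
  then show ?thesis by blast
qed

end
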